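(* Let $(\mathcal X,\rho)$ be a Polish space, $\mu$ a probability measure on $\mathcal X$, $n\ge1$, and $A$ a subset of the set of probability measures on $\mathcal X$ such that $\{x\in\mathcal X^n:L_n^x\in A\}$ is measurable. Then for every probability measure $\nu\ll\mu$ on $\mathcal X$ with $\nu^n(L_n^\cdot\in A)>0$, \[\frac1n\log\Big(\mu^n(L_n^\cdot\in A)\,e^{nH(\nu\,|\,\mu)}\Big)\ge -H(\nu\,|\,\mu)\frac{\nu^n(L_n^\cdot\in A^c)}{\nu^n(L_n^\cdot\in A)}+\frac1n\log\nu^n(L_n^\cdot\in A)-\frac{1}{n\,e\,\nu^n(L_n^\cdot\in A)}.\]
   Context: $L_n^x=\frac1n\sum_{i=1}^n\delta_{x^i}$ for $x=(x^1,\dots,x^n)\in\mathcal X^n$; $\nu^n(L_n^\cdot\in A)$ denotes $\nu^n(\{x:L_n^x\in A\})$. $H(\nu\,|\,\mu)=\int\log\frac{d\nu}{d\mu}d\nu$. *)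

theory Defs
  imports "HOL-Probability.Probability"
begin

definition emp_measure :: "nat \<Rightarrow> (nat \<Rightarrow> 'a::topological_space) \<Rightarrow> 'a measure" where
  "emp_measure n x = measure_of UNIV (sets borel)
     (\<lambda>B. ennreal ((\<Sum>i<n. indicator B (x i)) / real n))"

text \<open>The negative part of the integrand is always nu-integrable, so
  non-integrability means the integral is +infinity.\<close>
definition rel_entropy :: "'a measure \<Rightarrow> 'a measure \<Rightarrow> ereal" where
  "rel_entropy \<nu> \<mu> =
     (if integrable \<nu> (\<lambda>x. ln (enn2real (RN_deriv \<mu> \<nu> x)))
      then ereal (\<integral>x. ln (enn2real (RN_deriv \<mu> \<nu> x)) \<partial>\<nu>)
      else \<infinity>)"

end

theory Submission
  imports Defs
begin

(* Write P = nu^n and Q = mu^n.  Since nu << mu, P has the density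
   F(x) = prod_i g(x_i) with respect to Q, where g = d nu / d mu, and the log-likelihood
   ln F has P-integral n H(nu|mu) whenever the relative entropy is finite.  For a set S
   with s = P(S) > 0 two elementary inequalities are combined:
     (1) a change of measure with e^y >= 1 + y gives  Q(S) >= s exp(-(1/s) int_S ln F dP);
     (2) x ln x >= -1/e gives  int_{S^c} ln F dP = int_{S^c} F ln F dQ >= -1/e,
   so  int_S ln F dP <= n H + 1/e  and hence  ln Q(S) >= ln s - (n H + 1/e)/s.  Positivity of mu^n(S) is just
   absolute continuity of P with respect to Q. *)

lemma xlnx_ge_neg_inv_e:
  fixes x :: real
  assumes "0 \<le> x"
  shows "- 1 / exp 1 \<le> x * ln x"
proof (cases "x = 0")
  case False
  then have x: "0 < x" using assms by simp
  have "ln (1 / (exp 1 * x)) \<le> 1 / (exp 1 * x) - 1"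
    using x by (intro ln_le_minus_one) auto
  also have "ln (1 / (exp 1 * x)) = - 1 - ln x"
    using x by (simp add: ln_div ln_mult)
  finally have "x * (- ln x) \<le> x * (1 / (exp 1 * x))"
    using x by (intro mult_left_mono) auto
  then show ?thesis using x by simp
qed simp

(* Pointwise form of the change-of-measure step: from exp z >= 1 + z with
   z = -c - ln y one gets y e^c (1 - c - ln y) <= 1 for every y >= 0. *)
lemma tilted_exp_bound:
  fixes y c :: real
  assumes "0 \<le> y"
  shows "y * (exp c * (1 - c - ln y)) \<le> 1"
proof (cases "y = 0")
  case False
  then have y: "0 < y" using assms by simp
  have "1 + (- c - ln y) \<le> exp (- c - ln y)" by (rule exp_ge_add_one_self)
  also have "exp (- c - ln y) = 1 / (y * exp c)"
    using y by (simp add: exp_diff exp_minus field_simps)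
  finally have "y * exp c * (1 - c - ln y) \<le> y * exp c * (1 / (y * exp c))"
    using y by (intro mult_left_mono) auto
  then show ?thesis using y by (simp add: algebra_simps)
qed simp

lemma integrable_indicator_finite_measure:
  assumes "finite_measure M" "A \<in> sets M"
  shows "integrable M (indicator A :: _ \<Rightarrow> real)"
  using assms by (simp add: integrable_indicator_iff Int_absorb2 sets.sets_into_space
      finite_measure.emeasure_finite less_top[symmetric])

(* Inequality (2): on any set T, the log-density integrated against density Q F
   equals the integral of F ln F against Q, hence is at least -Q(T)/e. *)
lemma density_xlnx_integral_ge:
  fixes Q :: "'a measure" and F :: "'a \<Rightarrow> real"
  assumes Q: "finite_measure Q" and [measurable]: "F \<in> borel_measurable Q" "T \<in> sets Q"
    and F0: "\<And>x. 0 \<le> F x"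
    and int: "integrable (density Q F) (\<lambda>x. ln (F x) * indicator T x)"
  shows "- measure Q T / exp 1 \<le> (\<integral>x. ln (F x) * indicator T x \<partial>density Q F)"
proof -
  have "- measure Q T / exp 1 = (\<integral>x. (- 1 / exp 1) * indicator T x \<partial>Q)"
    by (simp add: Int_absorb2 sets.sets_into_space)
  also have "\<dots> \<le> (\<integral>x. F x * (ln (F x) * indicator T x) \<partial>Q)"
  proof (rule integral_mono)
    show "integrable Q (\<lambda>x. (- 1 / exp 1) * indicator T x :: real)"
      using integrable_indicator_finite_measure[OF Q] by simp
    show "integrable Q (\<lambda>x. F x * (ln (F x) * indicator T x))"
      using int F0 by (subst (asm) integrable_density) auto
    show "(- 1 / exp 1) * indicator T x \<le> F x * (ln (F x) * indicator T x)" for x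
      using xlnx_ge_neg_inv_e[OF F0[of x]] by (auto simp: indicator_def)
  qed
  also have "\<dots> = (\<integral>x. ln (F x) * indicator T x \<partial>density Q F)"
    using F0 by (subst integral_density) auto
  finally show ?thesis .
qed

(* Inequality (1): integrating the bound of tilted_exp_bound (with c the normalised
   log-likelihood of S) against Q shows that Q(S) dominates the tilted mass of S. *)
lemma density_measure_ge_tilted:
  fixes Q :: "'a measure" and F :: "'a \<Rightarrow> real"
  assumes Q: "finite_measure Q" and [measurable]: "F \<in> borel_measurable Q" "S \<in> sets Q"
    and F0: "\<And>x. 0 \<le> F x"
    and s: "0 < measure (density Q F) S"
    and int: "integrable (density Q F) (\<lambda>x. ln (F x) * indicator S x)"
  shows "measure (density Q F) S
           * exp (- (\<integral>x. ln (F x) * indicator S x \<partial>density Q F) / measure (density Q F) S)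
         \<le> measure Q S"
proof -
  define P where "P = density Q F"
  define s where "s = measure P S"
  define IS where "IS = (\<integral>x. ln (F x) * indicator S x \<partial>P)"
  define c where "c = - IS / s"
  define K where "K x = exp c * ((1 - c) * indicator S x - ln (F x) * indicator S x)" for x
  have [measurable]: "K \<in> borel_measurable Q" unfolding K_def by measurable
  have s_pos: "0 < s" using s by (simp add: s_def P_def)
  have "emeasure P S \<noteq> \<infinity>" using s_pos by (auto simp: s_def measure_def)
  then have int_S: "integrable P (indicator S :: _ \<Rightarrow> real)"
    by (simp add: P_def integrable_indicator_iff Int_absorb2 sets.sets_into_space less_top)
  have int_LS: "integrable P (\<lambda>x. ln (F x) * indicator S x)" using int by (simp add: P_def)
  have int_K: "integrable P K" unfolding K_def using int_S int_LS by simp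
  have "exp c * s = exp c * ((1 - c) * s - IS)"
    using s_pos by (simp add: c_def field_simps)
  also have "\<dots> = (\<integral>x. K x \<partial>P)"
    using int_S int_LS
    by (simp add: K_def IS_def s_def Bochner_Integration.integral_diff Int_absorb2
        sets.sets_into_space P_def)
  also have "\<dots> = (\<integral>x. F x * K x \<partial>Q)"
    unfolding P_def using F0 by (subst integral_density) auto
  also have "\<dots> \<le> (\<integral>x. indicator S x \<partial>Q)"
  proof (rule integral_mono)
    show "integrable Q (\<lambda>x. F x * K x)"
      using int_K F0 unfolding P_def by (subst (asm) integrable_density) auto
    show "integrable Q (indicator S :: _ \<Rightarrow> real)"
      by (rule integrable_indicator_finite_measure[OF Q]) simp
    show "F x * K x \<le> indicator S x" for x
      using tilted_exp_bound[OF F0[of x], of c] by (auto simp: K_def indicator_def algebra_simps)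
  qed
  also have "\<dots> = measure Q S" by (simp add: Int_absorb2 sets.sets_into_space)
  finally show ?thesis by (simp add: P_def s_def c_def IS_def mult.commute)
qed

(* Combination of (1) and (2): splitting the total log-likelihood over S and its
   complement yields the logarithmic lower bound for Q(S). *)
lemma log_measure_ge_density:
  fixes Q :: "'a measure" and F :: "'a \<Rightarrow> real"
  assumes Q: "prob_space Q" and [measurable]: "F \<in> borel_measurable Q" "S \<in> sets Q"
    and F0: "\<And>x. 0 \<le> F x"
    and s: "0 < measure (density Q F) S"
    and int: "integrable (density Q F) (\<lambda>x. ln (F x))"
  shows "ln (measure (density Q F) S)
           - ((\<integral>x. ln (F x) \<partial>density Q F) + 1 / exp 1) / measure (density Q F) S
         \<le> ln (measure Q S)"
proof -
  interpret Q: prob_space Q by fact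
  define P where "P = density Q F"
  define T where "T = space Q - S"
  define IS where "IS = (\<integral>x. ln (F x) * indicator S x \<partial>P)"
  define IT where "IT = (\<integral>x. ln (F x) * indicator T x \<partial>P)"
  have [measurable]: "T \<in> sets Q" by (simp add: T_def)
  have int_S: "integrable P (\<lambda>x. ln (F x) * indicator S x)"
    and int_T: "integrable P (\<lambda>x. ln (F x) * indicator T x)"
    using int by (auto simp: P_def intro: integrable_real_mult_indicator)
  have split: "(\<integral>x. ln (F x) \<partial>P) = IS + IT"
  proof -
    have "(\<integral>x. ln (F x) \<partial>P) = (\<integral>x. ln (F x) * indicator S x + ln (F x) * indicator T x \<partial>P)"
      by (intro Bochner_Integration.integral_cong) (auto simp: P_def T_def indicator_def)
    also have "\<dots> = IS + IT"
      unfolding IS_def IT_def using int_S int_T by (rule Bochner_Integration.integral_add)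
    finally show ?thesis .
  qed
  have "- 1 / exp 1 \<le> - measure Q T / exp 1"
    using Q.prob_le_1[of T] by (simp add: divide_right_mono)
  also have "\<dots> \<le> IT"
    using density_xlnx_integral_ge[OF Q.finite_measure_axioms _ _ F0] int_T
    by (simp add: IT_def P_def)
  finally have IS_le: "IS \<le> (\<integral>x. ln (F x) \<partial>P) + 1 / exp 1" using split by simp
  define s' where "s' = measure P S"
  have s'_pos: "0 < s'" using s by (simp add: s'_def P_def)
  define H where "H = (\<integral>x. ln (F x) \<partial>P)"
  have "s' * exp (- ((H + 1 / exp 1) / s')) \<le> s' * exp (- IS / s')"
    using IS_le s'_pos by (simp add: H_def field_simps)
  also have "\<dots> \<le> measure Q S"
    using density_measure_ge_tilted[OF Q.finite_measure_axioms _ _ F0 s] int_S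
    by (simp add: IS_def s'_def P_def)
  finally have bound: "s' * exp (- ((H + 1 / exp 1) / s')) \<le> measure Q S" .
  have "ln s' - (H + 1 / exp 1) / s' = ln (s' * exp (- ((H + 1 / exp 1) / s')))"
    using s'_pos by (simp add: ln_mult)
  also have "\<dots> \<le> ln (measure Q S)"
    using bound s'_pos by (intro ln_mono) auto
  finally show ?thesis by (simp add: s'_def H_def P_def)
qed

lemma PiM_density_prod:
  fixes \<mu> :: "'a measure" and g :: "'a \<Rightarrow> real"
  assumes mu: "prob_space \<mu>" and fI: "finite I" and [measurable]: "g \<in> borel_measurable \<mu>"
    and g0: "\<And>x. 0 \<le> g x" and pd: "prob_space (density \<mu> g)"
  shows "density (PiM I (\<lambda>_. \<mu>)) (\<lambda>x. \<Prod>i\<in>I. g (x i)) = PiM I (\<lambda>_. density \<mu> g)"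
proof -
  interpret Q: product_sigma_finite "\<lambda>_. \<mu>"
    using mu by (simp add: product_sigma_finite_def prob_space_imp_sigma_finite)
  interpret P: product_sigma_finite "\<lambda>_. density \<mu> g"
    using pd by (simp add: product_sigma_finite_def prob_space_imp_sigma_finite)
  show ?thesis
  proof (rule P.PiM_eqI[OF fI])
    show "sets (density (PiM I (\<lambda>_. \<mu>)) (\<lambda>x. \<Prod>i\<in>I. g (x i))) = sets (PiM I (\<lambda>_. density \<mu> g))"
      unfolding sets_density by (rule sets_PiM_cong) simp_all
  next
    fix A assume "\<And>i. i \<in> I \<Longrightarrow> A i \<in> sets (density \<mu> g)"
    then have A: "\<And>i. i \<in> I \<Longrightarrow> A i \<in> sets \<mu>" by simp
    have box: "Pi\<^sub>E I A \<in> sets (PiM I (\<lambda>_. \<mu>))"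
      using A fI by (intro sets_PiM_I_finite) auto
    have "emeasure (density (PiM I (\<lambda>_. \<mu>)) (\<lambda>x. \<Prod>i\<in>I. g (x i))) (Pi\<^sub>E I A)
       = (\<integral>\<^sup>+ x. ennreal (\<Prod>i\<in>I. g (x i)) * indicator (Pi\<^sub>E I A) x \<partial>PiM I (\<lambda>_. \<mu>))"
      using box by (intro emeasure_density) auto
    also have "\<dots> = (\<integral>\<^sup>+ x. (\<Prod>i\<in>I. ennreal (g (x i)) * indicator (A i) (x i)) \<partial>PiM I (\<lambda>_. \<mu>))"
    proof (rule nn_integral_cong)
      fix x assume x: "x \<in> space (PiM I (\<lambda>_. \<mu>))"
      have "(\<Prod>i\<in>I. indicator (A i) (x i) :: ennreal) = indicator (Pi\<^sub>E I A) x"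
        using x fI by (auto simp: indicator_def space_PiM PiE_def Pi_def extensional_def)
      then show "ennreal (\<Prod>i\<in>I. g (x i)) * indicator (Pi\<^sub>E I A) x
          = (\<Prod>i\<in>I. ennreal (g (x i)) * indicator (A i) (x i))"
        using g0 by (simp add: prod.distrib prod_ennreal)
    qed
    also have "\<dots> = (\<Prod>i\<in>I. \<integral>\<^sup>+ y. ennreal (g y) * indicator (A i) y \<partial>\<mu>)"
      using A by (intro Q.product_nn_integral_prod fI) auto
    also have "\<dots> = (\<Prod>i\<in>I. emeasure (density \<mu> g) (A i))"
      using A by (intro prod.cong refl emeasure_density[symmetric]) auto
    finally show "emeasure (density (PiM I (\<lambda>_. \<mu>)) (\<lambda>x. \<Prod>i\<in>I. g (x i))) (Pi\<^sub>E I A)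
       = (\<Prod>i\<in>I. emeasure (density \<mu> g) (A i))" .
  qed
qed

lemma PiM_integral_sum_components:
  fixes M :: "'a measure" and f :: "'a \<Rightarrow> real"
  assumes M: "prob_space M" and fI: "finite I" and f: "integrable M f"
  shows "integrable (PiM I (\<lambda>_. M)) (\<lambda>x. \<Sum>i\<in>I. f (x i))"
    and "(\<integral>x. (\<Sum>i\<in>I. f (x i)) \<partial>PiM I (\<lambda>_. M)) = real (card I) * (\<integral>x. f x \<partial>M)"
proof -
  have [measurable]: "f \<in> borel_measurable M" using f by simp
  have component: "distr (PiM I (\<lambda>_. M)) M (\<lambda>x. x i) = M" if "i \<in> I" for i
    using that M by (intro distr_PiM_component) auto
  have int_i: "integrable (PiM I (\<lambda>_. M)) (\<lambda>x. f (x i))"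
    and integral_i: "(\<integral>x. f (x i) \<partial>PiM I (\<lambda>_. M)) = (\<integral>x. f x \<partial>M)" if i: "i \<in> I" for i
    using integrable_distr_eq[of "\<lambda>x. x i" "PiM I (\<lambda>_. M)" M f]
      integral_distr[of "\<lambda>x. x i" "PiM I (\<lambda>_. M)" M f] component[OF i] f i
    by auto
  show "integrable (PiM I (\<lambda>_. M)) (\<lambda>x. \<Sum>i\<in>I. f (x i))"
    using int_i by (rule Bochner_Integration.integrable_sum)
  have "(\<integral>x. (\<Sum>i\<in>I. f (x i)) \<partial>PiM I (\<lambda>_. M)) = (\<Sum>i\<in>I. \<integral>x. f (x i) \<partial>PiM I (\<lambda>_. M))"
    using int_i by (rule Bochner_Integration.integral_sum)
  also have "\<dots> = real (card I) * (\<integral>x. f x \<partial>M)" using integral_i by simp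
  finally show "(\<integral>x. (\<Sum>i\<in>I. f (x i)) \<partial>PiM I (\<lambda>_. M)) = real (card I) * (\<integral>x. f x \<partial>M)" .
qed

definition likelihood :: "'a measure \<Rightarrow> 'a measure \<Rightarrow> 'a \<Rightarrow> real" where
  "likelihood \<mu> \<nu> x = enn2real (RN_deriv \<mu> \<nu> x)"

lemma likelihood_nonneg: "0 \<le> likelihood \<mu> \<nu> x"
  by (simp add: likelihood_def)

lemma borel_measurable_likelihood [measurable]: "likelihood \<mu> \<nu> \<in> borel_measurable \<mu>"
  unfolding likelihood_def by simp

lemma density_likelihood:
  assumes "prob_space \<mu>" "prob_space \<nu>" and sets: "sets \<nu> = sets \<mu>"
    and ac: "absolutely_continuous \<mu> \<nu>"
  shows "density \<mu> (likelihood \<mu> \<nu>) = \<nu>"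
proof -
  interpret mu: prob_space \<mu> by fact
  interpret nu: prob_space \<nu> by fact
  have "AE x in \<mu>. RN_deriv \<mu> \<nu> x \<noteq> \<infinity>"
    using ac sets nu.sigma_finite_measure_axioms by (intro mu.RN_deriv_finite) auto
  then have "density \<mu> (likelihood \<mu> \<nu>) = density \<mu> (RN_deriv \<mu> \<nu>)"
    by (intro density_cong) (auto simp: likelihood_def less_top)
  also have "\<dots> = \<nu>" using ac sets by (rule mu.density_RN_deriv)
  finally show ?thesis .
qed

lemma likelihood_pos_AE:
  assumes "density \<mu> (likelihood \<mu> \<nu>) = \<nu>"
  shows "AE x in \<nu>. 0 < likelihood \<mu> \<nu> x"
proof -
  have "AE x in density \<mu> (likelihood \<mu> \<nu>). 0 < likelihood \<mu> \<nu> x"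
    by (subst AE_density) auto
  then show ?thesis using assms by metis
qed

lemma PiM_density_likelihood:
  assumes "prob_space \<mu>" "prob_space \<nu>" "sets \<nu> = sets \<mu>" "absolutely_continuous \<mu> \<nu>"
    and "finite I"
  shows "PiM I (\<lambda>_. \<nu>) = density (PiM I (\<lambda>_. \<mu>)) (\<lambda>x. \<Prod>i\<in>I. likelihood \<mu> \<nu> (x i))"
  using PiM_density_prod[OF assms(1,5) borel_measurable_likelihood likelihood_nonneg]
    density_likelihood[OF assms(1-4)] assms(2)
  by simp

lemma rel_entropy_finiteD:
  assumes "rel_entropy \<nu> \<mu> = ereal h"
  shows "integrable \<nu> (\<lambda>x. ln (likelihood \<mu> \<nu> x))" and "(\<integral>x. ln (likelihood \<mu> \<nu> x) \<partial>\<nu>) = h"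
  using assms unfolding rel_entropy_def likelihood_def by (auto split: if_splits)

(* The log-likelihood of nu^I against mu^I is the sum of the coordinate
   log-likelihoods, so its integral is card I times the relative entropy. *)
lemma PiM_log_likelihood:
  assumes nu: "prob_space \<nu>" and fI: "finite I"
    and dens: "density \<mu> (likelihood \<mu> \<nu>) = \<nu>" and h: "rel_entropy \<nu> \<mu> = ereal h"
  shows "integrable (PiM I (\<lambda>_. \<nu>)) (\<lambda>x. ln (\<Prod>i\<in>I. likelihood \<mu> \<nu> (x i)))"
    and "(\<integral>x. ln (\<Prod>i\<in>I. likelihood \<mu> \<nu> (x i)) \<partial>PiM I (\<lambda>_. \<nu>)) = real (card I) * h"
proof -
  let ?P = "PiM I (\<lambda>_. \<nu>)"
  have sets: "sets \<nu> = sets \<mu>" by (metis dens sets_density)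
  have [measurable]: "likelihood \<mu> \<nu> \<in> borel_measurable \<nu>"
    using sets by (simp cong: measurable_cong_sets)
  have "AE x in ?P. \<forall>i\<in>I. 0 < likelihood \<mu> \<nu> (x i)"
    using likelihood_pos_AE[OF dens] nu fI
    by (intro eventually_ball_finite ballI AE_PiM_component) auto
  then have ln_prod_AE:
    "AE x in ?P. ln (\<Prod>i\<in>I. likelihood \<mu> \<nu> (x i)) = (\<Sum>i\<in>I. ln (likelihood \<mu> \<nu> (x i)))"
    by eventually_elim (rule ln_prod[OF fI], force)
  note sum = PiM_integral_sum_components[OF nu fI rel_entropy_finiteD(1)[OF h]]
  show "integrable ?P (\<lambda>x. ln (\<Prod>i\<in>I. likelihood \<mu> \<nu> (x i)))"
    using integrable_cong_AE[OF _ _ ln_prod_AE] sum(1) by simp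
  show "(\<integral>x. ln (\<Prod>i\<in>I. likelihood \<mu> \<nu> (x i)) \<partial>?P) = real (card I) * h"
    using integral_cong_AE[OF _ _ ln_prod_AE] sum(2) rel_entropy_finiteD(2)[OF h] by simp
qed

lemma PiM_measure_lower_bound:
  fixes \<mu> \<nu> :: "'a measure"
  assumes mu: "prob_space \<mu>" and nu: "prob_space \<nu>" and sets_eq: "sets \<nu> = sets \<mu>"
    and ac: "absolutely_continuous \<mu> \<nu>" and fI: "finite I"
    and S[measurable]: "S \<in> sets (PiM I (\<lambda>_. \<mu>))"
    and s_pos: "0 < measure (PiM I (\<lambda>_. \<nu>)) S"
  shows "0 < measure (PiM I (\<lambda>_. \<mu>)) S"
    and "rel_entropy \<nu> \<mu> = ereal h \<Longrightarrow>
         ln (measure (PiM I (\<lambda>_. \<nu>)) S)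
           - (real (card I) * h + 1 / exp 1) / measure (PiM I (\<lambda>_. \<nu>)) S
         \<le> ln (measure (PiM I (\<lambda>_. \<mu>)) S)"
proof -
  define Q where "Q = PiM I (\<lambda>_. \<mu>)"
  define P where "P = PiM I (\<lambda>_. \<nu>)"
  define F where "F x = (\<Prod>i\<in>I. likelihood \<mu> \<nu> (x i))" for x
  interpret Q: prob_space Q unfolding Q_def using mu by (intro prob_space_PiM) auto
  interpret P: prob_space P unfolding P_def using nu by (intro prob_space_PiM) auto
  have P_density: "P = density Q F"
    unfolding P_def Q_def F_def using mu nu sets_eq ac fI by (rule PiM_density_likelihood)
  have F_meas[measurable]: "F \<in> borel_measurable Q" unfolding F_def Q_def by measurable
  have F_nonneg: "0 \<le> F x" for x by (simp add: F_def likelihood_nonneg prod_nonneg)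
  have P_abs_cont: "absolutely_continuous Q P"
    unfolding P_density by (rule absolutely_continuousI_density) measurable
  have "0 < measure Q S"
  proof (rule ccontr)
    assume "\<not> 0 < measure Q S"
    then have "emeasure Q S = 0" using measure_nonneg[of Q S] by (simp add: Q.emeasure_eq_measure)
    then have "emeasure P S = 0" using absolutely_continuousD[OF P_abs_cont] by (simp add: Q_def)
    then show False using s_pos by (simp add: P_def measure_def)
  qed
  then show "0 < measure (PiM I (\<lambda>_. \<mu>)) S" by (simp add: Q_def)
  assume h: "rel_entropy \<nu> \<mu> = ereal h"
  note log_likelihood = PiM_log_likelihood[OF nu fI density_likelihood[OF mu nu sets_eq ac] h]
  have "integrable (density Q F) (\<lambda>x. ln (F x))"
    and "(\<integral>x. ln (F x) \<partial>density Q F) = real (card I) * h"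
    using log_likelihood unfolding P_density[symmetric] unfolding P_def F_def by simp_all
  moreover have "S \<in> sets Q" and "0 < measure (density Q F) S"
    using S s_pos unfolding P_density[symmetric] unfolding P_def Q_def by simp_all
  ultimately have "ln (measure P S) - (real (card I) * h + 1 / exp 1) / measure P S
      \<le> ln (measure Q S)"
    using log_measure_ge_density[OF Q.prob_space_axioms F_meas _ F_nonneg] by (simp add: P_density)
  then show "ln (measure (PiM I (\<lambda>_. \<nu>)) S)
      - (real (card I) * h + 1 / exp 1) / measure (PiM I (\<lambda>_. \<nu>)) S
      \<le> ln (measure (PiM I (\<lambda>_. \<mu>)) S)"
    by (simp add: P_def Q_def)
qed

lemma rearrange_log_bound:
  fixes n :: nat and s q h :: real
  assumes n: "1 \<le> n" and s: "0 < s" and q: "0 < q"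
    and bound: "ln s - (real n * h + 1 / exp 1) / s \<le> ln q"
  shows "- h * (1 - s) / s + (1 / real n) * ln s - 1 / (real n * exp 1 * s)
           \<le> (1 / real n) * ln (q * exp (real n * h))"
proof -
  have "- h * (1 - s) / s + (1 / real n) * ln s - 1 / (real n * exp 1 * s)
        = (1 / real n) * (ln s - (real n * h + 1 / exp 1) / s + real n * h)"
    using n s by (simp add: field_simps)
  also have "\<dots> \<le> (1 / real n) * (ln q + real n * h)"
    using bound by (intro mult_left_mono) auto
  also have "\<dots> = (1 / real n) * ln (q * exp (real n * h))"
    using q by (simp add: ln_mult)
  finally show ?thesis .
qed

theorem propositionA1:
  fixes \<mu> \<nu> :: "'a::polish_space measure"
    and A :: "'a measure set"
    and n :: nat
  assumes "prob_space \<mu>" and "sets \<mu> = sets borel"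
    and "n \<ge> 1"
    and "A \<subseteq> {M. prob_space M \<and> sets M = sets borel}"
    and "{x \<in> space (PiM {..<n} (\<lambda>_. \<mu>)). emp_measure n x \<in> A} \<in> sets (PiM {..<n} (\<lambda>_. \<mu>))"
    and "prob_space \<nu>" and "sets \<nu> = sets borel"
    and "absolutely_continuous \<mu> \<nu>"
    and "measure (PiM {..<n} (\<lambda>_. \<nu>)) {x \<in> space (PiM {..<n} (\<lambda>_. \<nu>)). emp_measure n x \<in> A} > 0"
  shows "(rel_entropy \<nu> \<mu> = \<infinity> \<longrightarrow>
            measure (PiM {..<n} (\<lambda>_. \<mu>)) {x \<in> space (PiM {..<n} (\<lambda>_. \<mu>)). emp_measure n x \<in> A} > 0)
       \<and> (\<forall>h. rel_entropy \<nu> \<mu> = ereal h \<longrightarrow>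
            (1 / real n) * ln (measure (PiM {..<n} (\<lambda>_. \<mu>))
                 {x \<in> space (PiM {..<n} (\<lambda>_. \<mu>)). emp_measure n x \<in> A} * exp (real n * h))
            \<ge> - h * measure (PiM {..<n} (\<lambda>_. \<nu>))
                    {x \<in> space (PiM {..<n} (\<lambda>_. \<nu>)). emp_measure n x \<notin> A}
                 / measure (PiM {..<n} (\<lambda>_. \<nu>))
                    {x \<in> space (PiM {..<n} (\<lambda>_. \<nu>)). emp_measure n x \<in> A}
              + (1 / real n) * ln (measure (PiM {..<n} (\<lambda>_. \<nu>))
                    {x \<in> space (PiM {..<n} (\<lambda>_. \<nu>)). emp_measure n x \<in> A})
              - 1 / (real n * exp 1 * measure (PiM {..<n} (\<lambda>_. \<nu>))
                    {x \<in> space (PiM {..<n} (\<lambda>_. \<nu>)). emp_measure n x \<in> A}))"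
proof -
  define Q where "Q = PiM {..<n} (\<lambda>_. \<mu>)"
  define P where "P = PiM {..<n} (\<lambda>_. \<nu>)"
  define S where "S = {x \<in> space Q. emp_measure n x \<in> A}"
  have sets_eq: "sets \<nu> = sets \<mu>" using assms(2,7) by simp
  have space_eq: "space P = space Q"
    unfolding P_def Q_def by (intro sets_eq_imp_space_eq sets_PiM_cong) (simp_all add: sets_eq)
  have S: "S \<in> sets Q" using assms(5) by (simp add: S_def Q_def)
  have s_pos: "0 < measure P S" using assms(9) space_eq by (simp add: S_def P_def Q_def)
  interpret P: prob_space P unfolding P_def using assms(6) by (intro prob_space_PiM) auto
  have "{x \<in> space P. emp_measure n x \<notin> A} = space P - S" using space_eq by (auto simp: S_def)
  then have compl: "measure P {x \<in> space P. emp_measure n x \<notin> A} = 1 - measure P S"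
    using P.prob_compl[of S] S space_eq by (simp add: P_def Q_def sets_eq cong: sets_PiM_cong)
  note bound = PiM_measure_lower_bound[OF assms(1,6) sets_eq assms(8) finite_lessThan[of n],
      folded Q_def P_def, OF S s_pos]
  have "- h * (1 - measure P S) / measure P S + (1 / real n) * ln (measure P S)
      - 1 / (real n * exp 1 * measure P S) \<le> (1 / real n) * ln (measure Q S * exp (real n * h))"
    if "rel_entropy \<nu> \<mu> = ereal h" for h
    using rearrange_log_bound[OF assms(3) s_pos bound(1)] bound(2)[OF that] by simp
  then show ?thesis
    using bound(1) compl space_eq by (simp add: S_def P_def Q_def)
qed

end
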